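(* Let $N\ge 1$, let $\Omega\subset\mathbb{R}^{3N}$ be open and bounded, let $\beta>0$, and let $U:\Omega\to\mathbb{R}\cup\{+\infty\}$ be a molecular potential of the form described in the context (so that in particular (P1)–(P3) hold), with $Z=\int_\Omega e^{-\beta U}dx\in(0,\infty)$. (a) There exists a family $\{U_\varepsilon\}_{\varepsilon>0}$ of functions $U_\varepsilon:\Omega\to\mathbb{R}$ such that: (i) each $U_\varepsilon$ is $C^1$ and Lipschitz; (ii) there is $M>0$ with $U_\varepsilon(x)\ge -M$ for all $x\in\Omega$ and all $\varepsilon>0$; (iii) $\lim_{\varepsilon\to0}U_\varepsilon(x)=U(x)$ for every $x\in\Omega$; (iv) $U_\varepsilon(x)=U(x)$ for every $x$ with $U(x)\le 1/\varepsilon$. (b) Set $F_\varepsilon=e^{-\beta U_\varepsilon}$, $F=e^{-\beta U}$, $Z_\varepsilon=\int_\Omega F_\varepsilon\,dx$, $Z=\int_\Omega F\,dx$, $\rho_\varepsilon=F_\varepsilon/Z_\varepsilon$, $\rho=F/Z$. Then each $\rho_\varepsilon$ is $C^1$ and Lipschitz, and $\lim_{\varepsilon\to0}\|\rho_\varepsilon-\rho\|_{L^1(\Omega)}=0$.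
   Context: Points of $\mathbb{R}^{3N}$ are written $x=(x_1,\dots,x_N)$, $x_i\in\mathbb{R}^3$. A molecular potential is $U(x)=\sum_{\text{bonds }(i,j)} b_{ij}(\ell_{ij}-\overline{\ell_{ij}})^2+\sum_{\text{bond angles }(i,j,k)} a_{ijk}(\alpha_{ijk}-\overline{\alpha_{ijk}})^2+\sum_{\text{torsions }(i,j,k,l)}\sum_{n=1}^{n_{\max}}\kappa_{ijkl,n}\big[1+\cos(n\phi_{ijkl}-\overline{\phi_{ijkl,n}})\big]+\sum_{i\neq j}\frac{q_iq_j}{|x_i-x_j|}+\sum_{i\neq j}\Big(\frac{A_{ij}}{|x_i-x_j|^{12}}-\frac{B_{ij}}{|x_i-x_j|^6}\Big)$, where the first three sums run over bond lengths $\ell_{ij}=|x_i-x_j|$, bond angles $\alpha_{ijk}$ and torsion (dihedral) angles $\phi_{ijkl}$ of a fixed bond graph, the last two over pairs of atoms; $b_{ij},a_{ijk}>0$, $\kappa_{ijkl,n},A_{ij},B_{ij}\ge0$, with $A_{ij}>0$ whenever $q_iq_j<0$ or $B_{ij}>0$; $\overline{\ell_{ij}},\overline{\alpha_{ijk}},\overline{\phi_{ijkl,n}},q_i$ are real constants. Such a potential is assumed to satisfy: (P1) $U$ is $C^1$ on $\{x: x_i\neq x_j\ \forall i\neq j\}$; (P2) $U\ge U_0$ for some constant $U_0$; (P3) $U(x)\to+\infty$ as $\min_{i\neq j}|x_i-x_j|\to0$. *)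

theory Defs
  imports "HOL-Analysis.Analysis" "HOL-Analysis.Cross3"
begin

text \<open>Configurations of N atoms: points of R^{3N} are x :: real^3^'n, with atoms
  indexed by the finite type 'n (N = CARD('n)); atom i sits at x $ i.\<close>

definition collision_free :: "(real^3^'n) set" where
  "collision_free = {x. \<forall>i j. i \<noteq> j \<longrightarrow> x $ i \<noteq> x $ j}"

definition bond_angle :: "real^3 \<Rightarrow> real^3 \<Rightarrow> real^3 \<Rightarrow> real" where
  "bond_angle x y z =
     arccos (((x - y) \<bullet> (z - y)) / (norm (x - y) * norm (z - y)))"

text \<open>Signed torsion (dihedral) angle of the chain w-x-y-z (IUPAC convention),
  values in (-pi, pi].\<close>
definition torsion_angle :: "real^3 \<Rightarrow> real^3 \<Rightarrow> real^3 \<Rightarrow> real^3 \<Rightarrow> real" where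
  "torsion_angle w x y z =
     (let b1 = x - w; b2 = y - x; b3 = z - y;
          n1 = cross3 b1 b2; n2 = cross3 b2 b3
      in Arg (Complex (n1 \<bullet> n2) (norm b2 * (b1 \<bullet> n2))))"

record 'n mol_params =
  bonds :: "('n \<times> 'n) set"
  angles :: "('n \<times> 'n \<times> 'n) set"
  torsions :: "('n \<times> 'n \<times> 'n \<times> 'n) set"
  nmax :: nat
  bcoef :: "'n \<Rightarrow> 'n \<Rightarrow> real"
  lbar :: "'n \<Rightarrow> 'n \<Rightarrow> real"
  acoef :: "'n \<Rightarrow> 'n \<Rightarrow> 'n \<Rightarrow> real"
  abar :: "'n \<Rightarrow> 'n \<Rightarrow> 'n \<Rightarrow> real"
  kappa :: "'n \<Rightarrow> 'n \<Rightarrow> 'n \<Rightarrow> 'n \<Rightarrow> nat \<Rightarrow> real"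
  phibar :: "'n \<Rightarrow> 'n \<Rightarrow> 'n \<Rightarrow> 'n \<Rightarrow> nat \<Rightarrow> real"
  charge :: "'n \<Rightarrow> real"
  LJA :: "'n \<Rightarrow> 'n \<Rightarrow> real"
  LJB :: "'n \<Rightarrow> 'n \<Rightarrow> real"

definition bonded :: "'n mol_params \<Rightarrow> 'n \<Rightarrow> 'n \<Rightarrow> bool" where
  "bonded P i j \<longleftrightarrow> (i, j) \<in> bonds P \<or> (j, i) \<in> bonds P"

definition mol_admissible :: "'n mol_params \<Rightarrow> bool" where
  "mol_admissible P \<longleftrightarrow>
     (\<forall>i j. (i, j) \<in> bonds P \<longrightarrow> i \<noteq> j) \<and>
     angles P \<subseteq> {(i, j, k). bonded P i j \<and> bonded P j k \<and> i \<noteq> k} \<and>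
     torsions P \<subseteq> {(i, j, k, l). bonded P i j \<and> bonded P j k \<and>
                                 bonded P k l \<and> distinct [i, j, k, l]} \<and>
     (\<forall>(i, j) \<in> bonds P. bcoef P i j > 0) \<and>
     (\<forall>(i, j, k) \<in> angles P. acoef P i j k > 0) \<and>
     (\<forall>(i, j, k, l) \<in> torsions P. \<forall>n. kappa P i j k l n \<ge> 0) \<and>
     (\<forall>i j. LJA P i j \<ge> 0 \<and> LJB P i j \<ge> 0) \<and>
     (\<forall>i j. i \<noteq> j \<and> (charge P i * charge P j < 0 \<or> LJB P i j > 0) \<longrightarrow> LJA P i j > 0)"

text \<open>The molecular potential (as a real-valued formula; meaningful on collision_free).\<close>
definition mol_V :: "('n::finite) mol_params \<Rightarrow> real^3^'n \<Rightarrow> real" where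
  "mol_V P x =
     (\<Sum>(i, j) \<in> bonds P. bcoef P i j * (norm (x $ i - x $ j) - lbar P i j)\<^sup>2)
   + (\<Sum>(i, j, k) \<in> angles P.
        acoef P i j k * (bond_angle (x $ i) (x $ j) (x $ k) - abar P i j k)\<^sup>2)
   + (\<Sum>(i, j, k, l) \<in> torsions P. \<Sum>n = 1..nmax P.
        kappa P i j k l n *
          (1 + cos (real n * torsion_angle (x $ i) (x $ j) (x $ k) (x $ l) - phibar P i j k l n)))
   + (\<Sum>i\<in>UNIV. \<Sum>j \<in> UNIV - {i}. charge P i * charge P j / norm (x $ i - x $ j))
   + (\<Sum>i\<in>UNIV. \<Sum>j \<in> UNIV - {i}.
        LJA P i j / norm (x $ i - x $ j) ^ 12 - LJB P i j / norm (x $ i - x $ j) ^ 6)"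

definition C1_on :: "'a::euclidean_space set \<Rightarrow> ('a \<Rightarrow> real) \<Rightarrow> bool" where
  "C1_on S f \<longleftrightarrow> (\<exists>f'. (\<forall>x \<in> S. (f has_derivative blinfun_apply (f' x)) (at x)) \<and>
                         continuous_on S f')"

definition boltz :: "real \<Rightarrow> ereal \<Rightarrow> real" where
  "boltz \<beta> u = (if u = \<infinity> then 0 else exp (- \<beta> * real_of_ereal u))"

end

(* Truncate the potential softly at level a = 1/\<epsilon>: set U\<^sub>\<epsilon> = a + H (V - a) on the
   collision-free set and U\<^sub>\<epsilon> = a + 1 at collisions, where H is a C^1 cap equal to the
   identity on (-\<infinity>, 0] and to 1 on [2, \<infinity>). By (P3) the potential exceeds a + 2 near
   every collision, so U\<^sub>\<epsilon> is locally constant there; hence it is C^1 on the whole space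
   and Lipschitz on the bounded set \<Omega>. It coincides with U where U \<le> a, is bounded below
   by min U\<^sub>0 0, and converges to U pointwise as a \<rightarrow> \<infinity>. The Boltzmann factors
   exp (-\<beta> U\<^sub>\<epsilon>) are therefore uniformly bounded and converge pointwise to exp (-\<beta> U), so
   dominated convergence gives convergence of the partition functions and then L^1
   convergence of the normalised densities. Only (P1)-(P3) are used, not the explicit
   form of the potential, and finiteness of Z is automatic because \<Omega> is bounded. *)

theory Submission
  imports Defs
begin

lemma has_real_derivative_pos_part_square:
  "((\<lambda>t. (max 0 t)\<^sup>2) has_real_derivative 2 * max 0 s) (at s)"
proof -
  have closures: "closure {..0::real} \<inter> closure {0<..} = {0}" by auto
  have "((\<lambda>t. if t \<in> {..0} then 0 else t\<^sup>2) has_derivative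
      (if s \<in> {..0} then (\<lambda>h. 0) else (\<lambda>h. h * (2 * s)))) (at s within {..0} \<union> {0<..})"
    by (rule has_derivative_If_within_closures[where f'="\<lambda>_ h. 0" and g'="\<lambda>t h. h * (2 * t)"])
      (auto simp: closures intro!: derivative_eq_intros)
  moreover have "{..0::real} \<union> {0<..} = UNIV" by auto
  moreover have "(\<lambda>t. if t \<in> {..0} then 0 else t\<^sup>2) = (\<lambda>t::real. (max 0 t)\<^sup>2)"
    by (auto simp: fun_eq_iff max_def)
  ultimately show ?thesis
    by (auto simp: has_field_derivative_def max_def fun_eq_iff elim!: has_derivative_eq_rhs)
qed

(* Piecewise: s for s \<le> 0, s - s^2/4 on [0, 2], and 1 for s \<ge> 2. *)
definition soft_cap :: "real \<Rightarrow> real" where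
  "soft_cap s = s - (max 0 s)\<^sup>2 / 4 + (max 0 (s - 2))\<^sup>2 / 4"

definition soft_cap' :: "real \<Rightarrow> real" where
  "soft_cap' s = 1 - max 0 s / 2 + max 0 (s - 2) / 2"

lemma soft_cap_has_real_derivative: "(soft_cap has_real_derivative soft_cap' s) (at s)"
proof -
  have "((\<lambda>t. (max 0 (t - 2))\<^sup>2) has_real_derivative 2 * max 0 (s - 2) * 1) (at s)"
    by (rule DERIV_chain2[OF has_real_derivative_pos_part_square]) (auto intro!: derivative_eq_intros)
  then have "((\<lambda>t. t - (max 0 t)\<^sup>2 / 4 + (max 0 (t - 2))\<^sup>2 / 4) has_real_derivative
      1 - 2 * max 0 s / 4 + 2 * max 0 (s - 2) * 1 / 4) (at s)"
    by (intro DERIV_add DERIV_diff DERIV_ident DERIV_cdivide has_real_derivative_pos_part_square)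
  then show ?thesis by (simp add: soft_cap_def[abs_def] soft_cap'_def)
qed

lemma continuous_on_soft_cap': "continuous_on UNIV soft_cap'"
  unfolding soft_cap'_def by (intro continuous_intros) auto

lemma soft_cap_eq_self: "s \<le> 0 \<Longrightarrow> soft_cap s = s"
  by (simp add: soft_cap_def)

lemma soft_cap_eq_1: "2 \<le> s \<Longrightarrow> soft_cap s = 1"
  by (simp add: soft_cap_def max_def power2_eq_square field_simps)

lemma soft_cap'_eq_0: "2 \<le> s \<Longrightarrow> soft_cap' s = 0"
  by (simp add: soft_cap'_def field_simps)

lemma soft_cap_ge_min: "min s 0 \<le> soft_cap s"
proof (cases "0 \<le> s \<and> s \<le> 2")
  case True
  then have "s * s \<le> 2 * s" by (intro mult_right_mono) auto
  then show ?thesis using True by (simp add: soft_cap_def max_def power2_eq_square)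
qed (auto simp: soft_cap_eq_self soft_cap_eq_1)

lemma C1_on_imp_continuous_on: "C1_on S f \<Longrightarrow> continuous_on S f"
  unfolding C1_on_def
  by (metis continuous_at_imp_continuous_on has_derivative_continuous)

lemma C1_on_subset: "C1_on T f \<Longrightarrow> S \<subseteq> T \<Longrightarrow> C1_on S f"
  unfolding C1_on_def by (metis continuous_on_subset subsetD)

lemma C1_on_compose:
  assumes f: "C1_on S f"
    and g: "\<And>t. (g has_real_derivative g' t) (at t)" and g': "continuous_on UNIV g'"
  shows "C1_on S (\<lambda>x. g (f x))"
proof -
  obtain D where D: "\<forall>x\<in>S. (f has_derivative blinfun_apply (D x)) (at x)"
    and D_cont: "continuous_on S D"
    using f unfolding C1_on_def by blast
  have "((\<lambda>x. g (f x)) has_derivative blinfun_apply (g' (f x) *\<^sub>R D x)) (at x)" if "x \<in> S" for x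
    using DERIV_compose_FDERIV[OF g D[rule_format, OF that]]
    by (rule has_derivative_eq_rhs) (simp add: fun_eq_iff scaleR_blinfun.rep_eq)
  moreover have "continuous_on S (\<lambda>x. g' (f x))"
    by (rule continuous_on_compose2[OF g' C1_on_imp_continuous_on[OF f]]) simp
  ultimately show ?thesis
    unfolding C1_on_def
    by (intro exI[where x="\<lambda>x. g' (f x) *\<^sub>R D x"] conjI ballI continuous_on_scaleR D_cont)
qed

lemma C1_on_UNIV_imp_lipschitz_on_bounded:
  fixes f :: "'a::euclidean_space \<Rightarrow> real"
  assumes f: "C1_on UNIV f" and "bounded \<Omega>"
  shows "\<exists>L. L-lipschitz_on \<Omega> f"
proof -
  obtain D where D: "\<And>x. (f has_derivative blinfun_apply (D x)) (at x)"
    and D_cont: "continuous_on UNIV D"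
    using f unfolding C1_on_def by blast
  obtain c R where R: "\<Omega> \<subseteq> cball c R"
    using \<open>bounded \<Omega>\<close> unfolding bounded_subset_cball by blast
  have "compact (D ` cball c R)"
    by (rule compact_continuous_image[OF continuous_on_subset[OF D_cont subset_UNIV] compact_cball])
  then obtain B where "B > 0" and B: "\<forall>y \<in> D ` cball c R. norm y \<le> B"
    by (metis compact_imp_bounded bounded_pos)
  have "B-lipschitz_on (cball c R) f"
  proof (rule bounded_derivative_imp_lipschitz[where f'="\<lambda>x. blinfun_apply (D x)"])
    show "(f has_derivative blinfun_apply (D x)) (at x within cball c R)" for x
      using D by (rule has_derivative_at_withinI)
    show "onorm (blinfun_apply (D x)) \<le> B" if "x \<in> cball c R" for x
      using B that by (simp add: norm_blinfun.rep_eq)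
  qed (use \<open>B > 0\<close> in auto)
  then show ?thesis using lipschitz_on_subset[OF _ R] by blast
qed

definition soft_truncation :: "'a set \<Rightarrow> ('a \<Rightarrow> real) \<Rightarrow> real \<Rightarrow> 'a \<Rightarrow> real" where
  "soft_truncation S V a x = (if x \<in> S then a + soft_cap (V x - a) else a + 1)"

lemma soft_truncation_eq_self: "x \<in> S \<Longrightarrow> V x \<le> a \<Longrightarrow> soft_truncation S V a x = V x"
  by (simp add: soft_truncation_def soft_cap_eq_self)

lemma soft_truncation_ge:
  assumes "0 \<le> a" and "\<And>y. y \<in> S \<Longrightarrow> c \<le> V y"
  shows "min c 0 \<le> soft_truncation S V a x"
  using assms(1) assms(2)[of x] soft_cap_ge_min[of "V x - a"]
  by (cases "x \<in> S") (auto simp: soft_truncation_def min_def split: if_splits)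

lemma tendsto_soft_truncation_at_top:
  "((\<lambda>a. ereal (soft_truncation S V a x)) \<longlongrightarrow> (if x \<in> S then ereal (V x) else \<infinity>)) at_top"
proof (cases "x \<in> S")
  case True
  have "\<forall>\<^sub>F a in at_top. soft_truncation S V a x = V x"
    using eventually_ge_at_top[of "V x"] by eventually_elim (simp add: True soft_truncation_eq_self)
  then show ?thesis
    using True by (simp add: tendsto_eventually)
next
  case False
  have "filterlim (\<lambda>a. a + 1) at_top (at_top :: real filter)"
    by (rule filterlim_at_top_mono[OF filterlim_ident]) simp
  then show ?thesis
    using False by (simp add: soft_truncation_def tendsto_PInfty_eq_at_top)
qed

lemma C1_on_soft_truncation:
  fixes V :: "'a::euclidean_space \<Rightarrow> real"
  assumes "open S" and "C1_on S V"
    and blowup: "\<And>x C. x \<notin> S \<Longrightarrow> \<forall>\<^sub>F y in nhds x. y \<in> S \<longrightarrow> C \<le> V y"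
  shows "C1_on UNIV (soft_truncation S V a)"
proof -
  obtain D where D: "\<forall>x\<in>S. (V has_derivative blinfun_apply (D x)) (at x)"
    and D_cont: "continuous_on S D"
    using \<open>C1_on S V\<close> unfolding C1_on_def by blast
  define D' where "D' x = (if x \<in> S then soft_cap' (V x - a) *\<^sub>R D x else 0)" for x
  have flat: "\<forall>\<^sub>F y in nhds x. soft_truncation S V a y = a + 1 \<and> D' y = 0" if "x \<notin> S" for x
    using blowup[OF that, of "a + 2"]
    by eventually_elim (auto simp: soft_truncation_def D'_def soft_cap_eq_1 soft_cap'_eq_0)
  have "(soft_truncation S V a has_derivative blinfun_apply (D' x)) (at x)" for x
  proof (cases "x \<in> S")
    case True
    have "((\<lambda>t. a + soft_cap (t - a)) has_real_derivative soft_cap' (V x - a)) (at (V x))"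
      by (auto intro!: derivative_eq_intros DERIV_chain2[OF soft_cap_has_real_derivative])
    from DERIV_compose_FDERIV[OF this D[rule_format, OF True]]
    have "((\<lambda>y. a + soft_cap (V y - a)) has_derivative blinfun_apply (D' x)) (at x)"
      by (rule has_derivative_eq_rhs) (simp add: D'_def True fun_eq_iff scaleR_blinfun.rep_eq)
    then show ?thesis
      by (rule has_derivative_transform_within_open[OF _ \<open>open S\<close> True])
        (simp add: soft_truncation_def)
  next
    case False
    have "\<forall>\<^sub>F y in at x. a + 1 = soft_truncation S V a y" and "a + 1 = soft_truncation S V a x"
      using flat[OF False] unfolding eventually_nhds_conv_at by (auto elim: eventually_mono)
    from has_derivative_transform_eventually[OF has_derivative_const this UNIV_I]
    show ?thesis by (simp add: D'_def False zero_blinfun.rep_eq[abs_def])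
  qed
  moreover have "isCont D' x" for x
  proof (cases "x \<in> S")
    case True
    have "continuous_on S (\<lambda>y. soft_cap' (V y - a) *\<^sub>R D y)"
      by (intro continuous_on_scaleR D_cont continuous_on_compose2[OF continuous_on_soft_cap']
          continuous_intros C1_on_imp_continuous_on[OF \<open>C1_on S V\<close>]) auto
    then have "isCont (\<lambda>y. soft_cap' (V y - a) *\<^sub>R D y) x"
      using \<open>open S\<close> True continuous_on_eq_continuous_at by blast
    moreover have "\<forall>\<^sub>F y in nhds x. D' y = soft_cap' (V y - a) *\<^sub>R D y"
      using eventually_nhds_in_open[OF \<open>open S\<close> True] by eventually_elim (simp add: D'_def)
    ultimately show ?thesis by (simp add: isCont_cong)
  next
    case False
    have "\<forall>\<^sub>F y in nhds x. D' y = 0"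
      using flat[OF False] by eventually_elim simp
    then show ?thesis by (simp add: isCont_cong)
  qed
  ultimately show ?thesis
    unfolding C1_on_def by (intro exI[where x=D'] conjI ballI continuous_at_imp_continuous_on)
qed

lemma open_collision_free: "open collision_free"
proof -
  have "collision_free = (\<Inter>(i, j) \<in> {(i, j). i \<noteq> j}. {x :: real^3^'n. x $ i \<noteq> x $ j})"
    by (auto simp: collision_free_def)
  also have "open \<dots>"
    by (intro open_INT) (auto intro!: open_Collect_neq continuous_intros)
  finally show ?thesis .
qed

lemma eventually_ge_near_collision:
  fixes V :: "real^3^'n \<Rightarrow> real"
  assumes blowup: "\<forall>C. \<exists>\<delta>>0. \<forall>x \<in> collision_free.
      (\<exists>i j. i \<noteq> j \<and> norm (x $ i - x $ j) < \<delta>) \<longrightarrow> C \<le> V x"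
    and "x \<notin> collision_free"
  shows "\<forall>\<^sub>F y in nhds x. y \<in> collision_free \<longrightarrow> C \<le> V y"
proof -
  obtain i j where "i \<noteq> j" and collide: "x $ i = x $ j"
    using \<open>x \<notin> collision_free\<close> by (auto simp: collision_free_def)
  obtain \<delta> where "\<delta> > 0"
    and \<delta>: "\<And>y. y \<in> collision_free \<Longrightarrow> norm (y $ i - y $ j) < \<delta> \<Longrightarrow> C \<le> V y"
    using blowup \<open>i \<noteq> j\<close> by meson
  have "norm (y $ i - y $ j) < \<delta>" if "dist y x < \<delta> / 2" for y
  proof -
    have "norm (y $ i - y $ j) = norm ((y - x) $ i - (y - x) $ j)"
      using collide by simp
    also have "\<dots> \<le> norm ((y - x) $ i) + norm ((y - x) $ j)"
      by (rule norm_triangle_ineq4)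
    also have "\<dots> \<le> 2 * dist y x"
      using Finite_Cartesian_Product.norm_nth_le[of "y - x" i]
        Finite_Cartesian_Product.norm_nth_le[of "y - x" j] by (simp add: dist_norm)
    finally show ?thesis using that by simp
  qed
  then show ?thesis
    unfolding eventually_nhds_metric using \<open>\<delta> > 0\<close> \<delta> half_gt_zero by blast
qed

lemma borel_measurable_tendsto_at_top:
  fixes f :: "real \<Rightarrow> 'a \<Rightarrow> real"
  assumes "\<And>t. f t \<in> borel_measurable M"
    and "\<And>x. x \<in> space M \<Longrightarrow> ((\<lambda>t. f t x) \<longlongrightarrow> g x) at_top"
  shows "g \<in> borel_measurable M"
  by (rule borel_measurable_LIMSEQ_real[where u="\<lambda>n. f (real n)"])
    (use assms filterlim_compose[OF _ filterlim_real_sequentially] in auto)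

context finite_measure
begin

lemma tendsto_nn_integral_abs_at_top:
  fixes h :: "real \<Rightarrow> 'a \<Rightarrow> real"
  assumes meas: "\<And>t. h t \<in> borel_measurable M"
    and bound: "\<forall>\<^sub>F t in at_top. \<forall>x\<in>space M. \<bar>h t x\<bar> \<le> K"
    and lim: "\<And>x. x \<in> space M \<Longrightarrow> ((\<lambda>t. h t x) \<longlongrightarrow> 0) at_top"
  shows "((\<lambda>t. \<integral>\<^sup>+x. ennreal \<bar>h t x\<bar> \<partial>M) \<longlongrightarrow> 0) at_top"
proof -
  have "((\<lambda>t. \<integral>x. \<bar>h t x\<bar> \<partial>M) \<longlongrightarrow> (\<integral>x. 0 \<partial>M)) at_top"
  proof (rule integral_dominated_convergence_at_top[where w="\<lambda>_. K"])
    show "AE x in M. ((\<lambda>t. \<bar>h t x\<bar>) \<longlongrightarrow> 0) at_top"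
      using lim tendsto_rabs_zero by (auto intro!: AE_I2)
    show "\<forall>\<^sub>F t in at_top. AE x in M. norm \<bar>h t x\<bar> \<le> K"
      using bound by eventually_elim (auto intro!: AE_I2)
  qed (use meas in auto)
  then have "((\<lambda>t. ennreal (\<integral>x. \<bar>h t x\<bar> \<partial>M)) \<longlongrightarrow> 0) at_top"
    using tendsto_ennrealI by fastforce
  moreover have "\<forall>\<^sub>F t in at_top. ennreal (\<integral>x. \<bar>h t x\<bar> \<partial>M) = (\<integral>\<^sup>+x. ennreal \<bar>h t x\<bar> \<partial>M)"
    using bound
  proof eventually_elim
    case (elim t)
    have "integrable M (\<lambda>x. \<bar>h t x\<bar>)"
      using elim meas by (intro integrable_const_bound[where B=K]) (auto intro!: AE_I2)
    then show ?case by (subst nn_integral_eq_integral) auto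
  qed
  ultimately show ?thesis
    by (rule Lim_transform_eventually)
qed

lemma tendsto_enn2real_nn_integral_at_top:
  fixes f :: "real \<Rightarrow> 'a \<Rightarrow> real"
  assumes meas: "\<And>t. f t \<in> borel_measurable M"
    and bound: "\<forall>\<^sub>F t in at_top. \<forall>x\<in>space M. 0 \<le> f t x \<and> f t x \<le> K"
    and lim: "\<And>x. x \<in> space M \<Longrightarrow> ((\<lambda>t. f t x) \<longlongrightarrow> g x) at_top"
  shows "((\<lambda>t. enn2real (\<integral>\<^sup>+x. ennreal (f t x) \<partial>M)) \<longlongrightarrow> enn2real (\<integral>\<^sup>+x. ennreal (g x) \<partial>M)) at_top"
proof -
  have g_meas: "g \<in> borel_measurable M"
    using meas lim by (rule borel_measurable_tendsto_at_top)
  have "0 \<le> g x" if "x \<in> space M" for x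
    using bound that by (intro tendsto_lowerbound[OF lim]) (auto elim: eventually_mono)
  then have "enn2real (\<integral>\<^sup>+x. ennreal (g x) \<partial>M) = (\<integral>x. g x \<partial>M)"
    using g_meas by (intro integral_eq_nn_integral[symmetric] AE_I2) auto
  moreover have "\<forall>\<^sub>F t in at_top. (\<integral>x. f t x \<partial>M) = enn2real (\<integral>\<^sup>+x. ennreal (f t x) \<partial>M)"
    using bound by eventually_elim (use meas in \<open>auto intro!: integral_eq_nn_integral AE_I2\<close>)
  moreover have "((\<lambda>t. \<integral>x. f t x \<partial>M) \<longlongrightarrow> (\<integral>x. g x \<partial>M)) at_top"
  proof (rule integral_dominated_convergence_at_top[where w="\<lambda>_. K"])
    show "\<forall>\<^sub>F t in at_top. AE x in M. norm (f t x) \<le> K"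
      using bound by eventually_elim (auto intro!: AE_I2)
  qed (use meas g_meas lim in \<open>auto intro!: AE_I2\<close>)
  ultimately show ?thesis
    by (auto intro: Lim_transform_eventually)
qed

lemma tendsto_L1_normalized_at_top:
  fixes f :: "real \<Rightarrow> 'a \<Rightarrow> real"
  assumes meas: "\<And>t. f t \<in> borel_measurable M"
    and bound: "\<forall>\<^sub>F t in at_top. \<forall>x\<in>space M. 0 \<le> f t x \<and> f t x \<le> K"
    and lim: "\<And>x. x \<in> space M \<Longrightarrow> ((\<lambda>t. f t x) \<longlongrightarrow> g x) at_top"
    and pos: "0 < (\<integral>\<^sup>+x. ennreal (g x) \<partial>M)"
  shows "((\<lambda>t. \<integral>\<^sup>+x. ennreal \<bar>f t x / enn2real (\<integral>\<^sup>+y. ennreal (f t y) \<partial>M)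
            - g x / enn2real (\<integral>\<^sup>+y. ennreal (g y) \<partial>M)\<bar> \<partial>M) \<longlongrightarrow> 0) at_top"
proof -
  define Z where "Z t = enn2real (\<integral>\<^sup>+y. ennreal (f t y) \<partial>M)" for t
  define Zg where "Zg = enn2real (\<integral>\<^sup>+y. ennreal (g y) \<partial>M)"
  have Z_lim: "(Z \<longlongrightarrow> Zg) at_top"
    unfolding Z_def Zg_def using meas bound lim by (rule tendsto_enn2real_nn_integral_at_top)
  have g_meas: "g \<in> borel_measurable M"
    using meas lim by (rule borel_measurable_tendsto_at_top)
  have g_bound: "0 \<le> g x \<and> g x \<le> K" if "x \<in> space M" for x
    using bound that
    by (auto intro!: tendsto_lowerbound[OF lim] tendsto_upperbound[OF lim] elim: eventually_mono)
  have "(\<integral>\<^sup>+x. ennreal (g x) \<partial>M) \<le> (\<integral>\<^sup>+x. ennreal K \<partial>M)"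
    using g_bound by (intro nn_integral_mono) (simp add: ennreal_leI)
  also have "\<dots> < \<infinity>"
    by (simp add: less_top[symmetric] ennreal_mult_eq_top_iff emeasure_finite)
  finally have "0 < Zg"
    using pos by (simp add: Zg_def enn2real_positive_iff)
  have "\<forall>\<^sub>F t in at_top. Zg / 2 < Z t"
    using \<open>0 < Zg\<close> by (intro order_tendstoD(1)[OF Z_lim]) simp
  define h where "h t x = f t x / Z t - g x / Zg" for t x
  have "((\<lambda>t. \<integral>\<^sup>+x. ennreal \<bar>h t x\<bar> \<partial>M) \<longlongrightarrow> 0) at_top"
  proof (rule tendsto_nn_integral_abs_at_top[where K="3 * K / Zg"])
    show "h t \<in> borel_measurable M" for t
      unfolding h_def using meas g_meas by measurable
    show "((\<lambda>t. h t x) \<longlongrightarrow> 0) at_top" if "x \<in> space M" for x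
      unfolding h_def
      using tendsto_diff[OF tendsto_divide[OF lim[OF that] Z_lim] tendsto_const, of "g x / Zg"] \<open>0 < Zg\<close>
      by simp
    show "\<forall>\<^sub>F t in at_top. \<forall>x\<in>space M. \<bar>h t x\<bar> \<le> 3 * K / Zg"
      using bound \<open>\<forall>\<^sub>F t in at_top. Zg / 2 < Z t\<close>
    proof eventually_elim
      case (elim t)
      show ?case
      proof
        fix x assume "x \<in> space M"
        then have "f t x / Z t \<le> K / (Zg / 2)"
          using elim \<open>0 < Zg\<close> by (intro frac_le) auto
        moreover have "g x / Zg \<le> K / Zg" "0 \<le> f t x / Z t" "0 \<le> g x / Zg"
          using elim g_bound \<open>x \<in> space M\<close> \<open>0 < Zg\<close> by (auto intro!: divide_right_mono)
        ultimately show "\<bar>h t x\<bar> \<le> 3 * K / Zg"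
          by (simp add: h_def abs_le_iff)
      qed
    qed
  qed
  then show ?thesis
    by (simp add: h_def Z_def Zg_def)
qed

end

lemma tendsto_boltz:
  assumes "0 < \<beta>" and lim: "((\<lambda>t. ereal (u t)) \<longlongrightarrow> v) F" and "v \<noteq> -\<infinity>"
  shows "((\<lambda>t. exp (- \<beta> * u t)) \<longlongrightarrow> boltz \<beta> v) F"
proof (cases v)
  case (real r)
  then have "(u \<longlongrightarrow> r) F"
    using lim by simp
  then show ?thesis
    using real by (auto simp: boltz_def intro!: tendsto_intros)
next
  case PInf
  then have "filterlim u at_top F"
    using lim by (simp add: tendsto_PInfty_eq_at_top)
  then have "filterlim (\<lambda>t. - \<beta> * u t) at_bot F"
    using \<open>0 < \<beta>\<close> by (intro filterlim_tendsto_neg_mult_at_bot[OF tendsto_const]) auto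
  then show ?thesis
    using PInf by (simp add: boltz_def filterlim_compose[OF exp_at_bot])
qed (use \<open>v \<noteq> -\<infinity>\<close> in simp)

lemma tendsto_L1_boltzmann_density_at_top:
  fixes W :: "real \<Rightarrow> 'a::euclidean_space \<Rightarrow> real" and u :: "'a \<Rightarrow> ereal"
  assumes "bounded \<Omega>" and "\<Omega> \<in> sets lborel" and "0 < \<beta>"
    and cont: "\<And>a. continuous_on UNIV (W a)"
    and lower: "\<And>a x. 0 \<le> a \<Longrightarrow> - C \<le> W a x"
    and lim: "\<And>x. x \<in> \<Omega> \<Longrightarrow> ((\<lambda>a. ereal (W a x)) \<longlongrightarrow> u x) at_top"
    and pos: "0 < (\<integral>\<^sup>+ x \<in> \<Omega>. ennreal (boltz \<beta> (u x)) \<partial>lborel)"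
  shows "((\<lambda>a. \<integral>\<^sup>+ x \<in> \<Omega>. ennreal
            \<bar>exp (- \<beta> * W a x) / enn2real (\<integral>\<^sup>+ y \<in> \<Omega>. ennreal (exp (- \<beta> * W a y)) \<partial>lborel)
             - boltz \<beta> (u x) / enn2real (\<integral>\<^sup>+ y \<in> \<Omega>. ennreal (boltz \<beta> (u y)) \<partial>lborel)\<bar> \<partial>lborel)
          \<longlongrightarrow> 0) at_top"
proof -
  define M where "M = restrict_space lborel \<Omega>"
  have set_nn_integral_eq: "(\<integral>\<^sup>+ x \<in> \<Omega>. f x \<partial>lborel) = (\<integral>\<^sup>+ x. f x \<partial>M)" for f
    using \<open>\<Omega> \<in> sets lborel\<close> by (simp add: M_def nn_integral_restrict_space)
  have space_M: "space M = \<Omega>"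
    by (simp add: M_def space_restrict_space)
  interpret finite_measure M
    using emeasure_bounded_finite[OF \<open>bounded \<Omega>\<close>] \<open>\<Omega> \<in> sets lborel\<close>
    by (intro finite_measureI) (simp add: M_def emeasure_restrict_space)
  have "((\<lambda>a. \<integral>\<^sup>+x. ennreal \<bar>exp (- \<beta> * W a x) / enn2real (\<integral>\<^sup>+y. ennreal (exp (- \<beta> * W a y)) \<partial>M)
            - boltz \<beta> (u x) / enn2real (\<integral>\<^sup>+y. ennreal (boltz \<beta> (u y)) \<partial>M)\<bar> \<partial>M) \<longlongrightarrow> 0) at_top"
  proof (rule tendsto_L1_normalized_at_top[where K="exp (\<beta> * C)"])
    show "(\<lambda>x. exp (- \<beta> * W a x)) \<in> borel_measurable M" for a
    proof -
      have "continuous_on UNIV (\<lambda>x. exp (- \<beta> * W a x))"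
        using cont by (intro continuous_intros)
      then show ?thesis
        unfolding M_def by (intro measurable_restrict_space1) (simp add: borel_measurable_continuous_onI)
    qed
    show "\<forall>\<^sub>F a in at_top. \<forall>x\<in>space M. 0 \<le> exp (- \<beta> * W a x) \<and> exp (- \<beta> * W a x) \<le> exp (\<beta> * C)"
    proof (intro eventually_mono[OF eventually_ge_at_top[of 0]] ballI conjI)
      fix a :: real and x assume "0 \<le> a"
      then have "\<beta> * (- W a x) \<le> \<beta> * C"
        using lower[of a x] \<open>0 < \<beta>\<close> by (intro mult_left_mono) auto
      then show "exp (- \<beta> * W a x) \<le> exp (\<beta> * C)"
        by simp
    qed simp
    show "((\<lambda>a. exp (- \<beta> * W a x)) \<longlongrightarrow> boltz \<beta> (u x)) at_top" if "x \<in> space M" for x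
    proof (rule tendsto_boltz[OF \<open>0 < \<beta>\<close> lim])
      have "\<forall>\<^sub>F a in at_top. ereal (- C) \<le> ereal (W a x)"
        using eventually_ge_at_top[of 0] by eventually_elim (simp add: lower)
      then have "ereal (- C) \<le> u x"
        using that space_M by (intro tendsto_lowerbound[OF lim]) auto
      then show "u x \<noteq> -\<infinity>"
        by auto
    qed (use that space_M in auto)
    show "0 < (\<integral>\<^sup>+x. ennreal (boltz \<beta> (u x)) \<partial>M)"
      using pos by (simp add: set_nn_integral_eq)
  qed
  then show ?thesis
    by (simp add: set_nn_integral_eq)
qed

theorem theorem5p1:
  fixes \<Omega> :: "(real^3^'n) set" and \<beta> :: real and P :: "'n mol_params"
    and U :: "real^3^'n \<Rightarrow> ereal"
  assumes "open \<Omega>" and "bounded \<Omega>" and "\<beta> > 0"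
    and "mol_admissible P"
    and U_def: "\<forall>x \<in> \<Omega>. U x = (if x \<in> collision_free then ereal (mol_V P x) else \<infinity>)"
    and P1: "C1_on collision_free (mol_V P)"
    and P2: "\<exists>U0. \<forall>x \<in> collision_free. mol_V P x \<ge> U0"
    and P3: "\<forall>C. \<exists>\<delta>>0. \<forall>x \<in> collision_free.
               (\<exists>i j. i \<noteq> j \<and> norm (x $ i - x $ j) < \<delta>) \<longrightarrow> mol_V P x \<ge> C"
    and Z_pos: "0 < (\<integral>\<^sup>+ x \<in> \<Omega>. ennreal (boltz \<beta> (U x)) \<partial>lborel)"
    and Z_fin: "(\<integral>\<^sup>+ x \<in> \<Omega>. ennreal (boltz \<beta> (U x)) \<partial>lborel) < \<infinity>"
  shows "\<exists>Ue :: real \<Rightarrow> real^3^'n \<Rightarrow> real.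
    \<comment> \<open>(a)(i)\<close>
    (\<forall>\<epsilon>>0. C1_on \<Omega> (Ue \<epsilon>) \<and> (\<exists>L. L-lipschitz_on \<Omega> (Ue \<epsilon>))) \<and>
    \<comment> \<open>(a)(ii)\<close>
    (\<exists>M>0. \<forall>\<epsilon>>0. \<forall>x \<in> \<Omega>. Ue \<epsilon> x \<ge> - M) \<and>
    \<comment> \<open>(a)(iii)\<close>
    (\<forall>x \<in> \<Omega>. ((\<lambda>\<epsilon>. ereal (Ue \<epsilon> x)) \<longlongrightarrow> U x) (at_right 0)) \<and>
    \<comment> \<open>(a)(iv)\<close>
    (\<forall>\<epsilon>>0. \<forall>x \<in> \<Omega>. U x \<le> ereal (1 / \<epsilon>) \<longrightarrow> ereal (Ue \<epsilon> x) = U x) \<and>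
    \<comment> \<open>(b)\<close>
    (let F = (\<lambda>x. boltz \<beta> (U x));
         Z = enn2real (\<integral>\<^sup>+ x \<in> \<Omega>. ennreal (F x) \<partial>lborel);
         \<rho> = (\<lambda>x. F x / Z);
         Fe = (\<lambda>\<epsilon> x. exp (- \<beta> * Ue \<epsilon> x));
         Ze = (\<lambda>\<epsilon>. enn2real (\<integral>\<^sup>+ x \<in> \<Omega>. ennreal (Fe \<epsilon> x) \<partial>lborel));
         \<rho>e = (\<lambda>\<epsilon> x. Fe \<epsilon> x / Ze \<epsilon>)
     in (\<forall>\<epsilon>>0. C1_on \<Omega> (\<rho>e \<epsilon>) \<and> (\<exists>L. L-lipschitz_on \<Omega> (\<rho>e \<epsilon>))) \<and>
        ((\<lambda>\<epsilon>. \<integral>\<^sup>+ x \<in> \<Omega>. ennreal \<bar>\<rho>e \<epsilon> x - \<rho> x\<bar> \<partial>lborel) \<longlongrightarrow> 0) (at_right 0))"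
proof -
  define W where "W = soft_truncation collision_free (mol_V P)"
  obtain U0 where U0: "\<And>x. x \<in> collision_free \<Longrightarrow> U0 \<le> mol_V P x"
    using P2 by blast
  have W_C1: "C1_on UNIV (W a)" for a
    unfolding W_def using open_collision_free P1 eventually_ge_near_collision[OF P3]
    by (rule C1_on_soft_truncation)
  have W_lower: "- (\<bar>U0\<bar> + 1) \<le> W a x" if "0 \<le> a" for a x
    using soft_truncation_ge[where S=collision_free and V="mol_V P", OF that U0, of x]
    by (simp add: W_def)
  have W_lim: "((\<lambda>a. ereal (W a x)) \<longlongrightarrow> U x) at_top" if "x \<in> \<Omega>" for x
    using tendsto_soft_truncation_at_top[of collision_free "mol_V P" x] U_def that
    by (simp add: W_def)
  have "((\<lambda>t. exp (- \<beta> * t) / c) has_real_derivative - \<beta> * exp (- \<beta> * t) / c) (at t)" for c t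
    by (intro DERIV_cdivide) (auto intro!: derivative_eq_intros)
  then have density_C1: "C1_on UNIV (\<lambda>x. exp (- \<beta> * W a x) / c)" for a c
    by (rule C1_on_compose[OF W_C1]) (auto simp: divide_inverse intro!: continuous_intros)
  have inverse_level: "filterlim (\<lambda>\<epsilon>::real. 1 / \<epsilon>) at_top (at_right 0)"
    using filterlim_inverse_at_top_right by (simp add: inverse_eq_divide)
  have "\<Omega> \<in> sets lborel"
    using \<open>open \<Omega>\<close> by simp
  note L1 = tendsto_L1_boltzmann_density_at_top[OF \<open>bounded \<Omega>\<close> this \<open>0 < \<beta>\<close>
      C1_on_imp_continuous_on[OF W_C1] W_lower W_lim Z_pos]
  have C1_lipschitz: "C1_on \<Omega> f" "\<exists>L. L-lipschitz_on \<Omega> f" if "C1_on UNIV f" for f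
    using that C1_on_subset C1_on_UNIV_imp_lipschitz_on_bounded[OF _ \<open>bounded \<Omega>\<close>] by blast+
  show ?thesis
    unfolding Let_def
  proof (intro exI[where x="\<lambda>\<epsilon>. W (1 / \<epsilon>)"] conjI allI impI ballI
      C1_lipschitz W_C1 density_C1)
    show "\<exists>M>0. \<forall>\<epsilon>>0. \<forall>x\<in>\<Omega>. - M \<le> W (1 / \<epsilon>) x"
      using W_lower by (intro exI[where x="\<bar>U0\<bar> + 1"]) auto
    show "((\<lambda>\<epsilon>. ereal (W (1 / \<epsilon>) x)) \<longlongrightarrow> U x) (at_right 0)" if "x \<in> \<Omega>" for x
      by (rule filterlim_compose[OF W_lim[OF that] inverse_level])
    show "ereal (W (1 / \<epsilon>) x) = U x" if "0 < \<epsilon>" "x \<in> \<Omega>" "U x \<le> ereal (1 / \<epsilon>)" for \<epsilon> x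
      using that U_def by (auto simp: W_def soft_truncation_eq_self split: if_splits)
  qed (rule filterlim_compose[OF L1 inverse_level])
qed

end
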